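(* For every $\varepsilon>0$ there exists $C_\varepsilon\in\mathbb R$, depending only on $\varepsilon$ and $p$, such that $$|u|\le\varepsilon\,\Gamma(u)+C_\varepsilon\qquad\text{for all }u\in\bar I_p.$$
   Context: $p\in L^1_{loc}(\mathbb R_+)$ is absolutely continuous and increasing on $(0,\infty)$ (with $p'>0$), and $\lim_{u\to+\infty}p(u)=+\infty$. If $p(0):=\lim_{u\downarrow0}p(u)$ is finite, $p$ is extended to $\mathbb R$ by $p(u)=2p(0)-p(-u)$ for $u\le0$. $I_p=(0,\infty)$ if $p(0)=-\infty$ and $I_p=\mathbb R$ otherwise; $\bar I_p$ is its closure in $\mathbb R$. $\Gamma(u)=\int_1^u(p(a)-p(1))\,da$ for $u\in\bar I_p$. *)

theory Defs
  imports "HOL-Analysis.Analysis"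
begin

definition abs_cont_on_interval :: "(real \<Rightarrow> real) \<Rightarrow> real \<Rightarrow> real \<Rightarrow> bool" where
  "abs_cont_on_interval f a b \<longleftrightarrow>
     (\<forall>\<epsilon>>0. \<exists>\<delta>>0. \<forall>(n::nat) (s::nat \<Rightarrow> real) (t::nat \<Rightarrow> real).
        (\<forall>i<n. a \<le> s i \<and> s i \<le> t i \<and> t i \<le> b) \<and>
        (\<forall>i<n. \<forall>j<n. i \<noteq> j \<longrightarrow> t i \<le> s j \<or> t j \<le> s i) \<and>
        (\<Sum>i<n. t i - s i) < \<delta>
        \<longrightarrow> (\<Sum>i<n. \<bar>f (t i) - f (s i)\<bar>) < \<epsilon>)"

definition abs_cont_on_pos :: "(real \<Rightarrow> real) \<Rightarrow> bool" where
  "abs_cont_on_pos f \<longleftrightarrow> (\<forall>a b. 0 < a \<and> a \<le> b \<longrightarrow> abs_cont_on_interval f a b)"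

text \<open>The value p(0) := lim_{u -> 0+} p(u) (meaningful when finite).\<close>
definition p0 :: "(real \<Rightarrow> real) \<Rightarrow> real" where
  "p0 p = Lim (at_right 0) p"

definition p0_infinite :: "(real \<Rightarrow> real) \<Rightarrow> bool" where
  "p0_infinite p \<longleftrightarrow> filterlim p at_bot (at_right 0)"

text \<open>The extension of p: equal to p on (0,oo); if p(0) is finite, p(0) at 0 and
  the odd reflection 2 p(0) - p(-u) for u < 0.  (Values off I_p are irrelevant when
  p(0) = -oo, except at 0 where they do not affect integrals.)\<close>
definition pext :: "(real \<Rightarrow> real) \<Rightarrow> real \<Rightarrow> real" where
  "pext p u = (if 0 < u then p u else if u = 0 then p0 p else 2 * p0 p - p (- u))"

definition Ip :: "(real \<Rightarrow> real) \<Rightarrow> real set" where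
  "Ip p = (if p0_infinite p then {0<..} else UNIV)"

definition Gamma_p :: "(real \<Rightarrow> real) \<Rightarrow> real \<Rightarrow> real" where
  "Gamma_p p u = (LBINT a=1..u. pext p a - pext p 1)"

end

theory Submission
  imports Defs
begin

text \<open>Since \<open>\<Gamma>' = p - p(1)\<close> is increasing and vanishes at \<open>1\<close>, the function \<open>\<Gamma>\<close> is
  convex with minimum \<open>\<Gamma>(1) = 0\<close>, so it lies above each of its tangent lines:
  \<open>\<Gamma>(u) \<ge> (p(m) - p(1)) (u - m)\<close> whenever \<open>m\<close> lies between \<open>1\<close> and \<open>u\<close>.
  Choosing \<open>M \<ge> 1\<close> with \<open>p(M) - p(1) \<ge> 1/\<epsilon>\<close> (possible since \<open>p \<rightarrow> \<infinity>\<close>) and using the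
  tangents at \<open>M\<close> and, when \<open>p(0)\<close> is finite, at \<open>-M\<close>, where the odd reflection gives
  slope \<open>\<le> -1/\<epsilon>\<close>, yields \<open>|u| \<le> \<epsilon> \<Gamma>(u) + M\<close>.\<close>

lemma interval_integral_ge_const_mul:
  fixes g :: "real \<Rightarrow> real"
  assumes "a \<le> b" and "set_integrable lborel {a<..<b} g"
    and "\<And>x. a < x \<Longrightarrow> x < b \<Longrightarrow> c \<le> g x"
  shows "c * (b - a) \<le> (LBINT x=a..b. g x)"
proof -
  have "set_integrable lborel {a<..<b} (\<lambda>x. c)"
    using interval_integral_const(1)[of a b c] assms(1)
    by (simp add: interval_lebesgue_integrable_def)
  then have "(LINT x:{a<..<b}|lborel. c) \<le> (LINT x:{a<..<b}|lborel. g x)"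
    by (rule set_integral_mono[OF _ assms(2)]) (use assms(3) in auto)
  moreover have "(LINT x:{a<..<b}|lborel. c) = c * (b - a)"
    using interval_lebesgue_integral_le_eq[of a b lborel "\<lambda>x. c"] assms(1) by simp
  ultimately show ?thesis
    using assms(1) by (simp add: interval_lebesgue_integral_le_eq)
qed

lemma interval_integral_le_const_mul:
  fixes g :: "real \<Rightarrow> real"
  assumes "a \<le> b" and "set_integrable lborel {a<..<b} g"
    and "\<And>x. a < x \<Longrightarrow> x < b \<Longrightarrow> g x \<le> c"
  shows "(LBINT x=a..b. g x) \<le> c * (b - a)"
proof -
  have "- c * (b - a) \<le> (LBINT x=a..b. - g x)"
    by (rule interval_integral_ge_const_mul)
       (use assms set_integrable_mult_right[of "-1" lborel "{a<..<b}" g] in auto)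
  then show ?thesis
    by (simp add: interval_lebesgue_integral_uminus)
qed

lemma interval_integral_split:
  fixes g :: "real \<Rightarrow> real"
  assumes "a \<le> m" and "m \<le> b" and "set_integrable lborel {a<..<b} g"
  shows "(LBINT x=a..b. g x) = (LBINT x=a..m. g x) + (LBINT x=m..b. g x)"
  using interval_integral_sum[of a m b g] assms
  by (simp add: interval_lebesgue_integrable_def min_absorb1 max_absorb2)

lemma set_integrable_Ioo_mono:
  fixes f :: "real \<Rightarrow> real"
  assumes "mono f"
  shows "set_integrable lborel {a<..<b} f"
proof -
  have "integrable (lebesgue_on {a..b}) f"
    by (rule integrable_mono_on) (use assms in \<open>auto simp: mono_on_def mono_def\<close>)
  then have "set_integrable lebesgue {a..b} f"
    by (simp add: set_integrable_eq)
  moreover have "(\<lambda>x. indicator {a..b} x *\<^sub>R f x) \<in> borel_measurable lborel"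
    using borel_measurable_mono[OF assms] by measurable
  ultimately have "set_integrable lborel {a..b} f"
    unfolding set_integrable_def using integrable_completion by blast
  then show ?thesis
    by (rule set_integrable_subset) auto
qed

lemma pext_pos: "0 < x \<Longrightarrow> pext p x = p x"
  by (simp add: pext_def)

lemma one_mem_Ip: "1 \<in> Ip p"
  by (simp add: Ip_def)

lemma mem_Ip_above_closure: "u \<in> closure (Ip p) \<Longrightarrow> u < x \<Longrightarrow> x \<in> Ip p"
  by (auto simp: Ip_def split: if_splits)

locale increasing_profile =
  fixes p :: "real \<Rightarrow> real"
  assumes locally_integrable: "\<And>b. 0 \<le> b \<Longrightarrow> set_integrable lborel {0..b} p"
    and mono: "mono_on {0<..} p"
    and p0_cases: "p0_infinite p \<or> (\<exists>L. (p \<longlongrightarrow> L) (at_right 0))"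
begin

lemma mono_on_pext: "mono_on (Ip p) (pext p)"
proof (cases "p0_infinite p")
  case True
  then show ?thesis
    using mono by (auto simp: Ip_def mono_on_def pext_pos)
next
  case False
  then obtain L where L: "(p \<longlongrightarrow> L) (at_right 0)"
    using p0_cases by blast
  then have p0_eq: "p0 p = L"
    by (simp add: p0_def tendsto_Lim)
  have L_le: "L \<le> p z" if "0 < z" for z
  proof (rule tendsto_upperbound[OF L])
    have "eventually (\<lambda>x. 0 < x \<and> x < z) (at_right (0::real))"
      using eventually_at_right_real[OF that] by simp
    then show "eventually (\<lambda>x. p x \<le> p z) (at_right 0)"
      by eventually_elim (use mono in \<open>auto simp: mono_on_def\<close>)
  qed simp
  have "pext p x \<le> pext p y" if "x \<le> y" for x y
    using that mono L_le[of "-x"] L_le[of y] L_le[of "-y"]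
    by (auto simp: pext_def p0_eq mono_on_def)
  then show ?thesis
    using False by (auto simp: Ip_def intro: mono_onI)
qed

lemma set_integrable_pext:
  assumes "a \<in> closure (Ip p)" and "a \<le> b"
  shows "set_integrable lborel {a<..<b} (pext p)"
proof (cases "0 \<le> a")
  case True
  have "set_integrable lborel {a<..<b} p"
    by (rule set_integrable_subset[OF locally_integrable[of b]]) (use True assms in auto)
  then show ?thesis
    by (rule set_integrable_cong[THEN iffD1, rotated -1]) (use True in \<open>auto simp: pext_pos\<close>)
next
  case False
  then have "Ip p = UNIV"
    using assms(1) by (auto simp: Ip_def split: if_splits)
  then show ?thesis
    using mono_on_pext by (simp add: set_integrable_Ioo_mono)
qed

lemma Gamma_p_ge_tangent:
  assumes u: "u \<in> closure (Ip p)" and m: "m \<in> Ip p"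
    and between: "1 \<le> m \<and> m \<le> u \<or> u \<le> m \<and> m \<le> 1"
  shows "(pext p m - pext p 1) * (u - m) \<le> Gamma_p p u"
proof -
  define g where "g x = pext p x - pext p 1" for x
  have Gamma_eq: "Gamma_p p u = (LBINT x=ereal 1..u. g x)"
    by (simp add: Gamma_p_def g_def one_ereal_def)
  have g_mono: "g x \<le> g y" if "x \<in> Ip p" "y \<in> Ip p" "x \<le> y" for x y
    using mono_on_pext that by (simp add: g_def mono_on_def)
  have g_int: "set_integrable lborel {a<..<b} g" if "a \<in> closure (Ip p)" "a \<le> b" for a b
    unfolding g_def using interval_integral_const(1)[of a b "pext p 1"] that
    by (intro set_integral_diff(1) set_integrable_pext)
       (auto simp: interval_lebesgue_integrable_def)
  have g_one: "g 1 = 0"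
    by (simp add: g_def)
  have one: "1 \<in> closure (Ip p)" "1 \<in> Ip p"
    using one_mem_Ip closure_subset by auto
  have m_cl: "m \<in> closure (Ip p)"
    using m closure_subset by auto
  show ?thesis
    using between
  proof
    assume um: "1 \<le> m \<and> m \<le> u"
    have "0 * (m - 1) \<le> (LBINT x=ereal 1..m. g x)"
      by (rule interval_integral_ge_const_mul)
         (use um g_int one g_one g_mono[of 1] mem_Ip_above_closure[OF one(1)] in auto)
    moreover have "g m * (u - m) \<le> (LBINT x=m..u. g x)"
      by (rule interval_integral_ge_const_mul)
         (use um g_int[OF m_cl] m g_mono[of m] mem_Ip_above_closure[OF m_cl] in auto)
    moreover have "(LBINT x=ereal 1..u. g x) = (LBINT x=ereal 1..m. g x) + (LBINT x=m..u. g x)"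
      using interval_integral_split[of 1 m u g] um g_int[OF one(1)] by (simp add: one_ereal_def)
    ultimately show ?thesis
      by (simp add: Gamma_eq g_def)
  next
    assume um: "u \<le> m \<and> m \<le> 1"
    have "(LBINT x=u..m. g x) \<le> g m * (m - u)"
      by (rule interval_integral_le_const_mul)
         (use um g_int[OF u] m g_mono mem_Ip_above_closure[OF u] in auto)
    moreover have "(LBINT x=m..ereal 1. g x) \<le> 0 * (1 - m)"
      by (rule interval_integral_le_const_mul)
         (use um g_int[OF m_cl] one g_one g_mono[of _ 1] mem_Ip_above_closure[OF m_cl] in auto)
    moreover have "(LBINT x=u..ereal 1. g x) = (LBINT x=u..m. g x) + (LBINT x=m..ereal 1. g x)"
      using interval_integral_split[of u m 1 g] um g_int[OF u] by (simp add: one_ereal_def)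
    ultimately show ?thesis
      by (simp add: Gamma_eq g_def interval_integral_endpoints_reverse[of "ereal 1"] algebra_simps)
  qed
qed

lemma Gamma_p_nonneg: "u \<in> closure (Ip p) \<Longrightarrow> 0 \<le> Gamma_p p u"
  using Gamma_p_ge_tangent[OF _ one_mem_Ip, of u] by (cases "u \<le> 1") auto

lemma Gamma_p_ge_abs_linear:
  assumes u: "u \<in> closure (Ip p)" and M: "1 \<le> M" and k: "0 \<le> k" "k \<le> p M - p 1"
  shows "k * (\<bar>u\<bar> - M) \<le> Gamma_p p u"
proof -
  have "k * (u - M) \<le> Gamma_p p u" if "M \<le> u"
  proof -
    have "k * (u - M) \<le> (p M - p 1) * (u - M)"
      using mult_right_mono[OF k(2), of "u - M"] that by simp
    also have "\<dots> \<le> Gamma_p p u"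
      using Gamma_p_ge_tangent[OF u, of M] M that by (simp add: Ip_def pext_pos)
    finally show ?thesis .
  qed
  moreover have "k * (- u - M) \<le> Gamma_p p u" if "u \<le> - M"
  proof -
    have Ip: "Ip p = UNIV"
      using u that M by (auto simp: Ip_def split: if_splits)
    then have "p0 p \<le> p 1"
      using mono_onD[OF mono_on_pext, of 0 1] by (simp add: pext_def)
    then have "pext p (- M) - pext p 1 \<le> - k"
      using M k by (simp add: pext_def)
    then have "- k * (u + M) \<le> (pext p (- M) - pext p 1) * (u + M)"
      by (rule mult_right_mono_neg) (use that in simp)
    then have "k * (- u - M) \<le> (pext p (- M) - pext p 1) * (u - - M)"
      by (simp add: algebra_simps)
    also have "\<dots> \<le> Gamma_p p u"
      using Gamma_p_ge_tangent[OF u, of "- M"] M that Ip by simp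
    finally show ?thesis .
  qed
  moreover have "k * (\<bar>u\<bar> - M) \<le> 0" if "\<bar>u\<bar> \<le> M"
    using that k(1) by (simp add: mult_nonneg_nonpos)
  ultimately show ?thesis
    using Gamma_p_nonneg[OF u] by (cases "0 \<le> u") (auto simp: abs_if, linarith+)
qed

end

theorem lemma3p2:
  fixes p :: "real \<Rightarrow> real"
  assumes L1loc: "\<And>b. 0 \<le> b \<Longrightarrow> set_integrable lborel {0..b} p"
    and ac: "abs_cont_on_pos p"
    and incr: "mono_on {0<..} p"
    and deriv_pos: "AE x in lborel. 0 < x \<longrightarrow> (\<exists>D>0. (p has_real_derivative D) (at x))"
    and lim_top: "filterlim p at_top at_top"
    and p0_cases: "p0_infinite p \<or> (\<exists>L. (p \<longlongrightarrow> L) (at_right 0))"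
    and eps: "0 < \<epsilon>"
  shows "\<exists>C::real. \<forall>u \<in> closure (Ip p). \<bar>u\<bar> \<le> \<epsilon> * Gamma_p p u + C"
proof -
  interpret increasing_profile p
    using L1loc incr p0_cases by unfold_locales
  have "eventually (\<lambda>x. p 1 + 1 / \<epsilon> \<le> p x) at_top"
    using lim_top by (simp add: filterlim_at_top)
  then obtain M where M: "1 \<le> M" "1 / \<epsilon> \<le> p M - p 1"
    unfolding eventually_at_top_linorder by (metis max.cobounded1 max.cobounded2 add.commute le_diff_eq)
  have "\<bar>u\<bar> \<le> \<epsilon> * Gamma_p p u + M" if u: "u \<in> closure (Ip p)" for u
  proof -
    have "(\<bar>u\<bar> - M) / \<epsilon> \<le> Gamma_p p u"
      using Gamma_p_ge_abs_linear[OF u M(1) _ M(2)] eps by simp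
    then show ?thesis
      using eps by (simp add: divide_le_eq mult.commute)
  qed
  then show ?thesis
    by blast
qed

end
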